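(* Let $\mathfrak M$ be a D2-brane, $M_\Lambda = \{\vec x \in \mathbb R^3, \ker(D_x)\not=0\}$ its eigenmanifold, and $M_\Lambda \ni x \mapsto |\Lambda(x) \rangle \hspace{-0.2em} \rangle \in \ker D_x$ a normalised quasicoherent state. Then: 1. $\langle \hspace{-0.2em} \langle \Lambda(\vec x)|\vec X|\Lambda(\vec x)\rangle \hspace{-0.2em} \rangle = \vec x$; 2. $\langle \hspace{-0.2em} \langle \Lambda(\vec x)|\vec \sigma|\Lambda(\vec x)\rangle \hspace{-0.2em} \rangle \in N_xM_\Lambda$ (it is a normal vector of the eigenmanifold at $x$); 3. $\Delta_x \vec X^2 = \frac{1}{2} {\varepsilon_{ij}}^k \langle \hspace{-0.2em} \langle \Lambda(x)|\sigma_k \otimes \Theta^{ij}|\Lambda(x)\rangle \hspace{-0.2em} \rangle$ (the Heisenberg uncertainty is minimised).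
   Context: A noncommutative D2-brane $\mathfrak M = (\mathfrak X,\mathbb C^2\otimes \mathscr F, D_x)$ is a spectral triple where $\mathscr F$ is a separable Hilbert space, $\mathfrak X$ a $*$-algebra of operators on $\mathscr F$, and $D_x = \sigma_i \otimes (X^i-x^i)$ its Dirac operator with $(\sigma_i)$ the Pauli matrices, $(X^i)$ self-adjoint operators of $\mathfrak X$ and $x\in\mathbb R^3$. $[X^i,X^j]=\imath\Theta^{ij}$, and $\Delta_x \vec X^2 = \langle \hspace{-0.2em} \langle \Lambda(x)|\vec X^2|\Lambda(x)\rangle \hspace{-0.2em} \rangle - \langle \hspace{-0.2em} \langle \Lambda(x)|\vec X|\Lambda(x)\rangle \hspace{-0.2em} \rangle^2$ with $\vec X^2=\delta_{ij}X^iX^j$. *)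

theory Defs
  imports "HOL-Analysis.Analysis"
begin

text \<open>The separable Hilbert space F is modelled (up to unitary isomorphism) as
  l2 over a countable index type 'i (finite or countably infinite).
  Vectors of C^2 (x) F are pairs of vectors of F.\<close>

type_synonym 'i vec = "'i \<Rightarrow> complex"
type_synonym 'i op = "'i vec \<Rightarrow> 'i vec"
type_synonym 'i spinor = "'i vec \<times> 'i vec"

definition ell2 :: "('i::countable) vec set" where
  "ell2 = {f. (\<lambda>n. (cmod (f n))\<^sup>2) summable_on UNIV}"

definition inner2 :: "('i::countable) vec \<Rightarrow> 'i vec \<Rightarrow> complex" where
  "inner2 f g = infsum (\<lambda>n. cnj (f n) * g n) UNIV"

definition norm2 :: "('i::countable) vec \<Rightarrow> real" where
  "norm2 f = sqrt (Re (inner2 f f))"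

definition dense_subspace :: "('i::countable) vec set \<Rightarrow> bool" where
  "dense_subspace Dom \<longleftrightarrow> Dom \<subseteq> ell2 \<and> (\<lambda>_. 0) \<in> Dom
     \<and> (\<forall>a f g. f \<in> Dom \<longrightarrow> g \<in> Dom \<longrightarrow> (\<lambda>n. a * f n + g n) \<in> Dom)
     \<and> (\<forall>f\<in>ell2. \<forall>e>0. \<exists>g\<in>Dom. norm2 (\<lambda>n. f n - g n) < e)"

text \<open>A (possibly unbounded) self-adjoint operator on the invariant domain Dom:
  linear, leaves Dom invariant, and Hermitian on Dom.\<close>
definition sa_op_on :: "('i::countable) vec set \<Rightarrow> 'i op \<Rightarrow> bool" where
  "sa_op_on Dom A \<longleftrightarrow> A ` Dom \<subseteq> Dom
     \<and> (\<forall>a f g. f \<in> Dom \<longrightarrow> g \<in> Dom \<longrightarrow> A (\<lambda>n. a * f n + g n) = (\<lambda>n. a * A f n + A g n))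
     \<and> (\<forall>f\<in>Dom. \<forall>g\<in>Dom. inner2 (A f) g = inner2 f (A g))"

definition pauli :: "3 \<Rightarrow> complex^2^2" where
  "pauli k = (if k = 1 then vector [vector [0, 1], vector [1, 0]]
              else if k = 2 then vector [vector [0, -\<i>], vector [\<i>, 0]]
              else vector [vector [1, 0], vector [0, -1]])"

definition sigma_tensor :: "3 \<Rightarrow> ('i::countable) op \<Rightarrow> 'i spinor \<Rightarrow> 'i spinor" where
  "sigma_tensor k A \<psi> =
     ((\<lambda>n. pauli k $ 1 $ 1 * A (fst \<psi>) n + pauli k $ 1 $ 2 * A (snd \<psi>) n),
      (\<lambda>n. pauli k $ 2 $ 1 * A (fst \<psi>) n + pauli k $ 2 $ 2 * A (snd \<psi>) n))"

definition id_tensor :: "('i::countable) op \<Rightarrow> 'i spinor \<Rightarrow> 'i spinor" where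
  "id_tensor A \<psi> = (A (fst \<psi>), A (snd \<psi>))"

definition spinor_inner :: "('i::countable) spinor \<Rightarrow> 'i spinor \<Rightarrow> complex" where
  "spinor_inner \<phi> \<psi> = inner2 (fst \<phi>) (fst \<psi>) + inner2 (snd \<phi>) (snd \<psi>)"

definition spinor_norm :: "('i::countable) spinor \<Rightarrow> real" where
  "spinor_norm \<psi> = sqrt (Re (spinor_inner \<psi> \<psi>))"

definition expect :: "('i::countable) spinor \<Rightarrow> ('i spinor \<Rightarrow> 'i spinor) \<Rightarrow> complex" where
  "expect \<psi> T = spinor_inner \<psi> (T \<psi>)"

definition dirac :: "(3 \<Rightarrow> ('i::countable) op) \<Rightarrow> real^3 \<Rightarrow> 'i spinor \<Rightarrow> 'i spinor" where
  "dirac X x \<psi> =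
     (let S = (\<lambda>k. sigma_tensor k (\<lambda>f n. X k f n - complex_of_real (x $ k) * f n) \<psi>)
      in ((\<lambda>n. \<Sum>k\<in>UNIV. fst (S k) n), (\<lambda>n. \<Sum>k\<in>UNIV. snd (S k) n)))"

definition dirac_kernel :: "('i::countable) vec set \<Rightarrow> (3 \<Rightarrow> 'i op) \<Rightarrow> real^3 \<Rightarrow> 'i spinor set" where
  "dirac_kernel Dom X x = {\<psi>. fst \<psi> \<in> Dom \<and> snd \<psi> \<in> Dom \<and> dirac X x \<psi> = ((\<lambda>_. 0), (\<lambda>_. 0))}"

definition eigenmanifold :: "('i::countable) vec set \<Rightarrow> (3 \<Rightarrow> 'i op) \<Rightarrow> (real^3) set" where
  "eigenmanifold Dom X = {x. \<exists>\<psi>\<in>dirac_kernel Dom X x. \<psi> \<noteq> ((\<lambda>_. 0), (\<lambda>_. 0))}"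

text \<open>Theta^{ij} defined by [X^i, X^j] = i Theta^{ij}.\<close>
definition Theta :: "(3 \<Rightarrow> ('i::countable) op) \<Rightarrow> 3 \<Rightarrow> 3 \<Rightarrow> 'i op" where
  "Theta X i j f = (\<lambda>n. - \<i> * (X i (X j f) n - X j (X i f) n))"

definition Xsq :: "(3 \<Rightarrow> ('i::countable) op) \<Rightarrow> 'i op" where
  "Xsq X f = (\<lambda>n. \<Sum>k\<in>UNIV. X k (X k f) n)"

definition uncertainty :: "(3 \<Rightarrow> ('i::countable) op) \<Rightarrow> 'i spinor \<Rightarrow> complex" where
  "uncertainty X \<psi> = expect \<psi> (id_tensor (Xsq X)) - (\<Sum>k\<in>UNIV. (expect \<psi> (id_tensor (X k)))\<^sup>2)"

definition levi_civita :: "3 \<Rightarrow> 3 \<Rightarrow> 3 \<Rightarrow> real" where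
  "levi_civita i j k =
     (if (i, j, k) \<in> {(1, 2, 3), (2, 3, 1), (3, 1, 2)} then 1
      else if (i, j, k) \<in> {(1, 3, 2), (3, 2, 1), (2, 1, 3)} then -1 else 0)"

definition tangent_vectors :: "(real^3) set \<Rightarrow> real^3 \<Rightarrow> (real^3) set" where
  "tangent_vectors S x = {v. \<exists>\<gamma> e. e > 0 \<and> \<gamma> 0 = x \<and> (\<forall>t\<in>{-e<..<e}. \<gamma> t \<in> S)
                                 \<and> (\<gamma> has_vector_derivative v) (at 0)}"

definition normal_vectors_at :: "(real^3) set \<Rightarrow> real^3 \<Rightarrow> (real^3) set" where
  "normal_vectors_at S x = {w. \<forall>v\<in>tangent_vectors S x. w \<bullet> v = 0}"

end

theory Submission
  imports Defs
begin

text \<open>Write Y_k = X^k - x^k, so that D_x = \<sigma>_k \<otimes> Y_k and the Y_k have the same commutators as the X^k.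
  (1) Pairing the two component equations of D_x \<Lambda> = 0 with both components of \<Lambda>, and using
  that the diagonal matrix elements of the hermitian Y_k are real, forces \<langle>\<Lambda>|Y_k|\<Lambda>\<rangle> = 0.
  (3) From \<sigma>_i \<sigma>_j = \<delta>_ij + i \<epsilon>_ijk \<sigma>_k one gets D_x^2 = \<Sum> Y_k^2 - 1/2 \<epsilon>_ijk \<sigma>_k \<otimes> \<Theta>^ij;
  by (1) the uncertainty is \<langle>\<Lambda>|\<Sum> Y_k^2|\<Lambda>\<rangle>, while \<langle>\<Lambda>|D_x^2|\<Lambda>\<rangle> = \<parallel>D_x \<Lambda>\<parallel>^2 = 0.
  (2) Since D_y = D_x - (y - x)_k \<sigma>_k and D_x is hermitian, \<Lambda>(y) \<in> ker D_y gives
  (y - x)_k \<langle>\<Lambda>(x)|\<sigma>_k|\<Lambda>(y)\<rangle> = 0. Along a curve y = \<gamma>(t) in the eigenmanifold, dividing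
  by t and letting t \<rightarrow> 0 (using continuity of \<Lambda>) gives \<gamma>'(0)_k \<langle>\<Lambda>(x)|\<sigma>_k|\<Lambda>(x)\<rangle> = 0.\<close>

section \<open>Square-summable sequences\<close>

lemma ell2_lincomb:
  assumes "f \<in> ell2" "g \<in> ell2"
  shows "(\<lambda>n. a * f n + g n) \<in> ell2"
proof -
  have bound: "(\<lambda>n. 2 * (cmod a)\<^sup>2 * (cmod (f n))\<^sup>2 + 2 * (cmod (g n))\<^sup>2) summable_on UNIV"
    using assms by (intro summable_on_add summable_on_cmult_right) (auto simp: ell2_def)
  have "(\<lambda>n. (cmod (a * f n + g n))\<^sup>2) summable_on UNIV"
  proof (rule summable_on_comparison_test[OF bound])
    fix n
    have "cmod (a * f n + g n) \<le> cmod a * cmod (f n) + cmod (g n)"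
      by (metis norm_mult norm_triangle_ineq)
    hence "(cmod (a * f n + g n))\<^sup>2 \<le> (cmod a * cmod (f n) + cmod (g n))\<^sup>2"
      by (simp add: power_mono)
    also have "\<dots> \<le> 2 * (cmod a * cmod (f n))\<^sup>2 + 2 * (cmod (g n))\<^sup>2"
      using sum_squares_bound[of "cmod a * cmod (f n)" "cmod (g n)"] by (simp add: power2_sum)
    finally show "(cmod (a * f n + g n))\<^sup>2 \<le> 2 * (cmod a)\<^sup>2 * (cmod (f n))\<^sup>2 + 2 * (cmod (g n))\<^sup>2"
      by (simp add: power_mult_distrib)
  qed auto
  thus ?thesis by (simp add: ell2_def)
qed

lemma ell2_zero [simp]: "(\<lambda>n. 0) \<in> ell2"
  by (simp add: ell2_def)

lemma ell2_add [simp]: "f \<in> ell2 \<Longrightarrow> g \<in> ell2 \<Longrightarrow> (\<lambda>n. f n + g n) \<in> ell2"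
  using ell2_lincomb[of f g 1] by simp

lemma ell2_scale [simp]: "f \<in> ell2 \<Longrightarrow> (\<lambda>n. a * f n) \<in> ell2"
  using ell2_lincomb[of f "\<lambda>n. 0" a] by simp

lemma ell2_diff [simp]: "f \<in> ell2 \<Longrightarrow> g \<in> ell2 \<Longrightarrow> (\<lambda>n. f n - g n) \<in> ell2"
  using ell2_lincomb[of g f "-1"] by simp

lemma ell2_norm_product_summable:
  assumes "f \<in> ell2" "g \<in> ell2"
  shows "(\<lambda>n. cmod (f n) * cmod (g n)) summable_on UNIV"
proof (rule summable_on_comparison_test)
  show "(\<lambda>n. (cmod (f n))\<^sup>2 + (cmod (g n))\<^sup>2) summable_on UNIV"
    using assms by (intro summable_on_add) (auto simp: ell2_def)
  show "cmod (f n) * cmod (g n) \<le> (cmod (f n))\<^sup>2 + (cmod (g n))\<^sup>2" for n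
    using sum_squares_bound[of "cmod (f n)" "cmod (g n)"]
      mult_nonneg_nonneg[OF norm_ge_zero norm_ge_zero, of "f n" "g n"] by linarith
qed auto

lemma inner2_summable:
  assumes "f \<in> ell2" "g \<in> ell2"
  shows "(\<lambda>n. cnj (f n) * g n) summable_on UNIV"
proof (rule abs_summable_summable)
  show "(\<lambda>n. norm (cnj (f n) * g n)) summable_on UNIV"
    using ell2_norm_product_summable[OF assms] by (simp add: norm_mult)
qed

lemma inner2_commute: "inner2 g f = cnj (inner2 f g)"
  unfolding inner2_def by (simp flip: infsum_cnj add: mult.commute)

lemma inner2_lincomb_right:
  assumes "f \<in> ell2" "g \<in> ell2" "h \<in> ell2"
  shows "inner2 f (\<lambda>n. a * g n + h n) = a * inner2 f g + inner2 f h"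
proof -
  have "inner2 f (\<lambda>n. a * g n + h n) = infsum (\<lambda>n. a * (cnj (f n) * g n) + cnj (f n) * h n) UNIV"
    unfolding inner2_def by (simp add: algebra_simps)
  also have "\<dots> = a * inner2 f g + inner2 f h"
    unfolding inner2_def using assms
    by (simp add: infsum_add summable_on_cmult_right inner2_summable infsum_cmult_right)
  finally show ?thesis .
qed

lemma inner2_zero_right [simp]: "inner2 f (\<lambda>n. 0) = 0"
  by (simp add: inner2_def)

lemma inner2_zero_left [simp]: "inner2 (\<lambda>n. 0) f = 0"
  by (simp add: inner2_def)

lemma inner2_add_right [simp]:
  "f \<in> ell2 \<Longrightarrow> g \<in> ell2 \<Longrightarrow> h \<in> ell2 \<Longrightarrow> inner2 f (\<lambda>n. g n + h n) = inner2 f g + inner2 f h"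
  using inner2_lincomb_right[of f g h 1] by simp

lemma inner2_scale_right [simp]:
  "f \<in> ell2 \<Longrightarrow> g \<in> ell2 \<Longrightarrow> inner2 f (\<lambda>n. a * g n) = a * inner2 f g"
  using inner2_lincomb_right[of f g "\<lambda>n. 0" a] by simp

lemma inner2_diff_right [simp]:
  "f \<in> ell2 \<Longrightarrow> g \<in> ell2 \<Longrightarrow> h \<in> ell2 \<Longrightarrow> inner2 f (\<lambda>n. g n - h n) = inner2 f g - inner2 f h"
  using inner2_lincomb_right[of f h g "-1"] by simp

lemma inner2_minus_right [simp]:
  "f \<in> ell2 \<Longrightarrow> g \<in> ell2 \<Longrightarrow> inner2 f (\<lambda>n. - g n) = - inner2 f g"
  using inner2_scale_right[of f g "-1"] by simp

lemma inner2_add_left [simp]: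
  "f \<in> ell2 \<Longrightarrow> g \<in> ell2 \<Longrightarrow> h \<in> ell2 \<Longrightarrow> inner2 (\<lambda>n. g n + h n) f = inner2 g f + inner2 h f"
  by (subst (1 2 3) inner2_commute) simp

lemma inner2_scale_left [simp]:
  "f \<in> ell2 \<Longrightarrow> g \<in> ell2 \<Longrightarrow> inner2 (\<lambda>n. a * g n) f = cnj a * inner2 g f"
  by (subst (1 2) inner2_commute) simp

lemma inner2_diff_left [simp]:
  "f \<in> ell2 \<Longrightarrow> g \<in> ell2 \<Longrightarrow> h \<in> ell2 \<Longrightarrow> inner2 (\<lambda>n. g n - h n) f = inner2 g f - inner2 h f"
  by (subst (1 2 3) inner2_commute) simp

lemma Re_inner2_self:
  assumes "f \<in> ell2"
  shows "Re (inner2 f f) = infsum (\<lambda>n. (cmod (f n))\<^sup>2) UNIV"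
proof -
  have "Re (inner2 f f) = infsum (\<lambda>n. Re (cnj (f n) * f n)) UNIV"
    unfolding inner2_def using inner2_summable[OF assms assms] by (rule infsum_Re[symmetric])
  also have "\<dots> = infsum (\<lambda>n. (cmod (f n))\<^sup>2) UNIV"
    by (metis Re_complex_of_real complex_norm_square mult.commute)
  finally show ?thesis .
qed

lemma inner2_self_nonneg: "f \<in> ell2 \<Longrightarrow> Re (inner2 f f) \<ge> 0"
  by (simp add: Re_inner2_self infsum_nonneg)

text \<open>A weighted AM-GM bound; it replaces the Cauchy-Schwarz inequality in the continuity argument.\<close>
lemma norm_inner2_le:
  assumes "f \<in> ell2" "g \<in> ell2" "t > 0"
  shows "cmod (inner2 f g) \<le> t / 2 * Re (inner2 f f) + Re (inner2 g g) / (2 * t)"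
proof -
  have sq: "(\<lambda>n. (cmod (f n))\<^sup>2) summable_on UNIV" "(\<lambda>n. (cmod (g n))\<^sup>2) summable_on UNIV"
    using assms by (simp_all add: ell2_def)
  have "cmod (inner2 f g) \<le> infsum (\<lambda>n. norm (cnj (f n) * g n)) UNIV"
    unfolding inner2_def
    by (rule norm_infsum_bound) (simp add: norm_mult ell2_norm_product_summable assms)
  also have "\<dots> \<le> infsum (\<lambda>n. t / 2 * (cmod (f n))\<^sup>2 + 1 / (2 * t) * (cmod (g n))\<^sup>2) UNIV"
  proof (rule infsum_mono)
    show "(\<lambda>n. t / 2 * (cmod (f n))\<^sup>2 + 1 / (2 * t) * (cmod (g n))\<^sup>2) summable_on UNIV"
      using sq by (intro summable_on_add summable_on_cmult_right)
    fix n
    have "2 * t * (cmod (f n) * cmod (g n)) \<le> (t * cmod (f n))\<^sup>2 + (cmod (g n))\<^sup>2"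
      using sum_squares_bound[of "t * cmod (f n)" "cmod (g n)"] by (simp add: mult_ac)
    thus "norm (cnj (f n) * g n) \<le> t / 2 * (cmod (f n))\<^sup>2 + 1 / (2 * t) * (cmod (g n))\<^sup>2"
      using assms(3) by (simp add: norm_mult field_simps power2_eq_square)
  qed (simp add: norm_mult ell2_norm_product_summable assms)
  also have "\<dots> = t / 2 * infsum (\<lambda>n. (cmod (f n))\<^sup>2) UNIV
      + 1 / (2 * t) * infsum (\<lambda>n. (cmod (g n))\<^sup>2) UNIV"
    by (simp only: infsum_add[OF summable_on_cmult_right[OF sq(1)] summable_on_cmult_right[OF sq(2)]]
        infsum_cmult_right')
  finally show ?thesis
    using assms by (simp add: Re_inner2_self)
qed

lemma tendsto_inner2_right_zero:
  assumes u: "u \<in> ell2" and ev: "\<forall>\<^sub>F t in F. h t \<in> ell2"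
    and lim: "((\<lambda>t. Re (inner2 (h t) (h t))) \<longlongrightarrow> 0) F"
  shows "((\<lambda>t. inner2 u (h t)) \<longlongrightarrow> 0) F"
proof (rule tendstoI)
  fix \<epsilon> :: real assume "\<epsilon> > 0"
  define N where "N = Re (inner2 u u)"
  have "N \<ge> 0" unfolding N_def using u by (rule inner2_self_nonneg)
  define \<tau> where "\<tau> = \<epsilon> / (N + 1)"
  have \<tau>: "\<tau> > 0" "\<tau> * N < \<epsilon>"
    unfolding \<tau>_def using \<open>\<epsilon> > 0\<close> \<open>N \<ge> 0\<close> by (simp_all add: field_simps)
  have "\<forall>\<^sub>F t in F. Re (inner2 (h t) (h t)) < \<tau> * \<epsilon>"
    using order_tendstoD(2)[OF lim] \<tau>(1) \<open>\<epsilon> > 0\<close> by simp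
  with ev show "\<forall>\<^sub>F t in F. dist (inner2 u (h t)) 0 < \<epsilon>"
  proof eventually_elim
    case (elim t)
    have "cmod (inner2 u (h t)) \<le> \<tau> / 2 * N + Re (inner2 (h t) (h t)) / (2 * \<tau>)"
      unfolding N_def using norm_inner2_le[OF u elim(1) \<tau>(1)] .
    also have "\<dots> < \<epsilon> / 2 + \<epsilon> / 2"
      using \<tau> elim(2) by (intro add_strict_mono) (simp_all add: field_simps)
    finally show ?case by simp
  qed
qed

lemma tendsto_inner2_right:
  assumes u: "u \<in> ell2" and g: "g \<in> ell2" and ev: "\<forall>\<^sub>F t in F. f t \<in> ell2"
    and lim: "((\<lambda>t. Re (inner2 (\<lambda>n. f t n - g n) (\<lambda>n. f t n - g n))) \<longlongrightarrow> 0) F"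
  shows "((\<lambda>t. inner2 u (f t)) \<longlongrightarrow> inner2 u g) F"
proof (rule LIM_zero_cancel)
  have "((\<lambda>t. inner2 u (\<lambda>n. f t n - g n)) \<longlongrightarrow> 0) F"
    using ev g by (intro tendsto_inner2_right_zero[OF u _ lim]) (auto elim: eventually_mono)
  moreover have "\<forall>\<^sub>F t in F. inner2 u (\<lambda>n. f t n - g n) = inner2 u (f t) - inner2 u g"
    using ev by eventually_elim (use u g in simp)
  ultimately show "((\<lambda>t. inner2 u (f t) - inner2 u g) \<longlongrightarrow> 0) F"
    by (rule Lim_transform_eventually)
qed

section \<open>Spinors\<close>

lemma spinor_inner_sigma_id:
  assumes "a \<in> ell2" "b \<in> ell2" "c \<in> ell2" "d \<in> ell2"
  shows "spinor_inner (c, d) (sigma_tensor k id (a, b)) =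
     pauli k $ 1 $ 1 * inner2 c a + pauli k $ 1 $ 2 * inner2 c b
   + pauli k $ 2 $ 1 * inner2 d a + pauli k $ 2 $ 2 * inner2 d b"
  using assms by (simp add: spinor_inner_def sigma_tensor_def)

lemma spinor_norm_nonneg: "fst \<psi> \<in> ell2 \<Longrightarrow> snd \<psi> \<in> ell2 \<Longrightarrow> spinor_norm \<psi> \<ge> 0"
  by (simp add: spinor_norm_def spinor_inner_def inner2_self_nonneg)

lemma tendsto_Re_inner2_components:
  assumes ev: "\<forall>\<^sub>F t in F. h1 t \<in> ell2 \<and> h2 t \<in> ell2"
    and lim: "((\<lambda>t. spinor_norm (h1 t, h2 t)) \<longlongrightarrow> 0) F"
  shows "((\<lambda>t. Re (inner2 (h1 t) (h1 t))) \<longlongrightarrow> 0) F"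
    and "((\<lambda>t. Re (inner2 (h2 t) (h2 t))) \<longlongrightarrow> 0) F"
proof -
  have sq: "((\<lambda>t. (spinor_norm (h1 t, h2 t))\<^sup>2) \<longlongrightarrow> 0) F"
    using tendsto_power[OF lim, of 2] by simp
  have bounds: "\<forall>\<^sub>F t in F. 0 \<le> Re (inner2 (h1 t) (h1 t)) \<and> 0 \<le> Re (inner2 (h2 t) (h2 t))
      \<and> (spinor_norm (h1 t, h2 t))\<^sup>2 = Re (inner2 (h1 t) (h1 t)) + Re (inner2 (h2 t) (h2 t))"
    using ev by eventually_elim (simp add: spinor_norm_def spinor_inner_def inner2_self_nonneg)
  show "((\<lambda>t. Re (inner2 (h1 t) (h1 t))) \<longlongrightarrow> 0) F"
    by (rule tendsto_sandwich[OF _ _ tendsto_const sq]) (use bounds in \<open>auto elim: eventually_mono\<close>)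
  show "((\<lambda>t. Re (inner2 (h2 t) (h2 t))) \<longlongrightarrow> 0) F"
    by (rule tendsto_sandwich[OF _ _ tendsto_const sq]) (use bounds in \<open>auto elim: eventually_mono\<close>)
qed

lemma tendsto_spinor_inner_sigma_id:
  assumes ell2: "a \<in> ell2" "b \<in> ell2" "c \<in> ell2" "d \<in> ell2"
    and ev: "\<forall>\<^sub>F t in F. fst (\<psi> t) \<in> ell2 \<and> snd (\<psi> t) \<in> ell2"
    and lim: "((\<lambda>t. spinor_norm ((\<lambda>n. fst (\<psi> t) n - a n), (\<lambda>n. snd (\<psi> t) n - b n))) \<longlongrightarrow> 0) F"
  shows "((\<lambda>t. spinor_inner (c, d) (sigma_tensor k id (\<psi> t)))
           \<longlongrightarrow> spinor_inner (c, d) (sigma_tensor k id (a, b))) F"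
proof -
  have ev_diff: "\<forall>\<^sub>F t in F. (\<lambda>n. fst (\<psi> t) n - a n) \<in> ell2 \<and> (\<lambda>n. snd (\<psi> t) n - b n) \<in> ell2"
    using ev by eventually_elim (use ell2 in simp)
  note components = tendsto_Re_inner2_components[OF ev_diff lim]
  have ev1: "\<forall>\<^sub>F t in F. fst (\<psi> t) \<in> ell2" and ev2: "\<forall>\<^sub>F t in F. snd (\<psi> t) \<in> ell2"
    using ev by (auto elim: eventually_mono)
  have "((\<lambda>t. pauli k $ 1 $ 1 * inner2 c (fst (\<psi> t)) + pauli k $ 1 $ 2 * inner2 c (snd (\<psi> t))
      + pauli k $ 2 $ 1 * inner2 d (fst (\<psi> t)) + pauli k $ 2 $ 2 * inner2 d (snd (\<psi> t)))
      \<longlongrightarrow> spinor_inner (c, d) (sigma_tensor k id (a, b))) F"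
    unfolding spinor_inner_sigma_id[OF ell2(1-4)]
    by (intro tendsto_intros tendsto_inner2_right[OF _ _ ev1 components(1)]
        tendsto_inner2_right[OF _ _ ev2 components(2)] ell2)
  moreover have "\<forall>\<^sub>F t in F. pauli k $ 1 $ 1 * inner2 c (fst (\<psi> t)) + pauli k $ 1 $ 2 * inner2 c (snd (\<psi> t))
      + pauli k $ 2 $ 1 * inner2 d (fst (\<psi> t)) + pauli k $ 2 $ 2 * inner2 d (snd (\<psi> t))
      = spinor_inner (c, d) (sigma_tensor k id (\<psi> t))"
    using ev by eventually_elim (metis spinor_inner_sigma_id ell2(3,4) prod.collapse)
  ultimately show ?thesis
    by (rule Lim_transform_eventually)
qed

section \<open>Curves\<close>

lemma tendsto_zero_along_curve:
  fixes g :: "'a::metric_space \<Rightarrow> real"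
  assumes eps_delta: "\<forall>e>0. \<exists>d>0. \<forall>y\<in>S. dist y x < d \<longrightarrow> g y < e"
    and lim: "(\<gamma> \<longlongrightarrow> x) F" and ev: "\<forall>\<^sub>F t in F. \<gamma> t \<in> S \<and> g (\<gamma> t) \<ge> 0"
  shows "((\<lambda>t. g (\<gamma> t)) \<longlongrightarrow> 0) F"
proof (rule tendstoI)
  fix e :: real assume "e > 0"
  then obtain d where "d > 0" and d: "\<forall>y\<in>S. dist y x < d \<longrightarrow> g y < e"
    using eps_delta by blast
  from ev tendstoD[OF lim \<open>d > 0\<close>] show "\<forall>\<^sub>F t in F. dist (g (\<gamma> t)) 0 < e"
    by eventually_elim (use d in auto)
qed

lemma annihilator_limit_annihilates_velocity:
  fixes \<gamma> :: "real \<Rightarrow> real^'n" and F :: "'n \<Rightarrow> real \<Rightarrow> complex"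
  assumes deriv: "(\<gamma> has_vector_derivative v) (at 0)"
    and annihilates: "\<forall>\<^sub>F t in at 0. (\<Sum>k\<in>UNIV. of_real (\<gamma> t $ k - \<gamma> 0 $ k) * F k t) = 0"
    and lim: "\<And>k. (F k \<longlongrightarrow> F0 k) (at 0)"
  shows "(\<Sum>k\<in>UNIV. of_real (v $ k) * F0 k) = 0"
proof -
  have quotient: "((\<lambda>t. (\<gamma> t $ k - \<gamma> 0 $ k) / t) \<longlongrightarrow> v $ k) (at 0)" for k
  proof -
    have "((\<lambda>t. \<gamma> t $ k) has_vector_derivative v $ k) (at 0)"
      using bounded_linear.has_vector_derivative[OF bounded_linear_vec_nth deriv] .
    thus ?thesis
      by (simp add: has_real_derivative_iff_has_vector_derivative[symmetric] has_field_derivative_iff)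
  qed
  define G where "G t = (\<Sum>k\<in>UNIV. of_real ((\<gamma> t $ k - \<gamma> 0 $ k) / t) * F k t)" for t
  have "(G \<longlongrightarrow> (\<Sum>k\<in>UNIV. of_real (v $ k) * F0 k)) (at 0)"
    unfolding G_def by (intro tendsto_intros quotient lim)
  moreover have "\<forall>\<^sub>F t in at 0. G t = 0"
    using annihilates
  proof eventually_elim
    case (elim t)
    have "G t = of_real (1 / t) * (\<Sum>k\<in>UNIV. of_real (\<gamma> t $ k - \<gamma> 0 $ k) * F k t)"
      unfolding G_def sum_distrib_left by (intro sum.cong refl) (simp add: of_real_divide)
    with elim show ?case by simp
  qed
  hence "(G \<longlongrightarrow> 0) (at 0)"
    by (simp add: tendsto_eventually)
  ultimately show ?thesis
    using tendsto_unique[OF at_neq_bot] by blast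
qed

section \<open>The Dirac operator of a D2-brane\<close>

definition shifted_coord :: "(3 \<Rightarrow> ('i::countable) op) \<Rightarrow> real^3 \<Rightarrow> 3 \<Rightarrow> 'i op" where
  "shifted_coord X x k f = (\<lambda>n. X k f n - complex_of_real (x $ k) * f n)"

lemma pauli_entries:
  "pauli 1 $ 1 $ 1 = 0" "pauli 1 $ 1 $ 2 = 1" "pauli 1 $ 2 $ 1 = 1" "pauli 1 $ 2 $ 2 = 0"
  "pauli 2 $ 1 $ 1 = 0" "pauli 2 $ 1 $ 2 = -\<i>" "pauli 2 $ 2 $ 1 = \<i>" "pauli 2 $ 2 $ 2 = 0"
  "pauli 3 $ 1 $ 1 = 1" "pauli 3 $ 1 $ 2 = 0" "pauli 3 $ 2 $ 1 = 0" "pauli 3 $ 2 $ 2 = -1"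
  by (simp_all add: pauli_def)

lemma levi_civita_values:
  "levi_civita 1 2 3 = 1" "levi_civita 2 3 1 = 1" "levi_civita 3 1 2 = 1"
  "levi_civita 1 3 2 = -1" "levi_civita 3 2 1 = -1" "levi_civita 2 1 3 = -1"
  "levi_civita i i k = 0" "levi_civita i k i = 0" "levi_civita k i i = 0"
  by (auto simp: levi_civita_def)

lemma dirac_components:
  "dirac X x (a, b) =
     ((\<lambda>n. shifted_coord X x 3 a n + shifted_coord X x 1 b n - \<i> * shifted_coord X x 2 b n),
      (\<lambda>n. shifted_coord X x 1 a n + \<i> * shifted_coord X x 2 a n - shifted_coord X x 3 b n))"
  by (simp add: dirac_def Let_def sigma_tensor_def sum_3 pauli_entries shifted_coord_def
      fun_eq_iff algebra_simps)

text \<open>With p k = \<langle>a|Y_k a\<rangle>, q k = \<langle>b|Y_k b\<rangle> and r k = \<langle>b|Y_k a\<rangle> for the shifted coordinates Y_k,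
  the four relations are the two Dirac equations for (a, b) paired with a and with b.\<close>
lemma kernel_moments_cancel:
  fixes p q r :: "3 \<Rightarrow> complex"
  assumes "\<And>k. Im (p k) = 0" "\<And>k. Im (q k) = 0"
    and "p 3 + cnj (r 1) - \<i> * cnj (r 2) = 0"
    and "r 3 + q 1 - \<i> * q 2 = 0"
    and "p 1 + \<i> * p 2 - cnj (r 3) = 0"
    and "r 1 + \<i> * r 2 - q 3 = 0"
  shows "p k + q k = 0"
proof -
  have "p 1 + q 1 = 0 \<and> p 2 + q 2 = 0 \<and> p 3 + q 3 = 0"
    using assms by (simp add: complex_eq_iff)
  thus ?thesis using exhaust_3[of k] by auto
qed

locale d2_brane =
  fixes Dom :: "('i::countable) vec set" and X :: "3 \<Rightarrow> 'i op"
  assumes dom: "dense_subspace Dom" and sa: "\<forall>k. sa_op_on Dom (X k)"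
begin

lemma Dom_ell2: "f \<in> Dom \<Longrightarrow> f \<in> ell2"
  using dom unfolding dense_subspace_def by blast

lemma Dom_lincomb: "f \<in> Dom \<Longrightarrow> g \<in> Dom \<Longrightarrow> (\<lambda>n. a * f n + g n) \<in> Dom"
  using dom unfolding dense_subspace_def by blast

lemma Dom_zero: "(\<lambda>n. 0) \<in> Dom"
  using dom unfolding dense_subspace_def by blast

lemma Dom_scale: "f \<in> Dom \<Longrightarrow> (\<lambda>n. a * f n) \<in> Dom"
  using Dom_lincomb[OF _ Dom_zero] by simp

lemma X_in_Dom: "f \<in> Dom \<Longrightarrow> X k f \<in> Dom"
  using sa unfolding sa_op_on_def by blast

lemma X_hermitian: "f \<in> Dom \<Longrightarrow> g \<in> Dom \<Longrightarrow> inner2 (X k f) g = inner2 f (X k g)"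
  using sa unfolding sa_op_on_def by blast

lemma shifted_coord_in_Dom: "f \<in> Dom \<Longrightarrow> shifted_coord X x k f \<in> Dom"
  using Dom_lincomb[where a = "- complex_of_real (x $ k)", OF _ X_in_Dom] by (simp add: shifted_coord_def)

lemma shifted_coord_hermitian:
  "f \<in> Dom \<Longrightarrow> g \<in> Dom \<Longrightarrow> inner2 (shifted_coord X x k f) g = inner2 f (shifted_coord X x k g)"
  using X_hermitian[of f g k] by (simp add: shifted_coord_def Dom_ell2 X_in_Dom)

lemma Theta_in_Dom:
  assumes "f \<in> Dom"
  shows "Theta X i j f \<in> Dom"
proof -
  have "(\<lambda>n. (- \<i>) * X i (X j f) n + \<i> * X j (X i f) n) \<in> Dom"
    using assms by (intro Dom_lincomb Dom_scale X_in_Dom)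
  moreover have "Theta X i j f = (\<lambda>n. (- \<i>) * X i (X j f) n + \<i> * X j (X i f) n)"
    by (simp add: Theta_def fun_eq_iff algebra_simps)
  ultimately show ?thesis
    by simp
qed

lemmas Dom_simps = Dom_ell2 X_in_Dom shifted_coord_in_Dom Theta_in_Dom

text \<open>The commutator of the coordinates does not see the shift by x.\<close>
lemma inner2_Theta:
  assumes "f \<in> Dom" "g \<in> Dom"
  shows "inner2 g (Theta X i j f) = - \<i> * (inner2 (shifted_coord X x i g) (shifted_coord X x j f)
           - inner2 (shifted_coord X x j g) (shifted_coord X x i f))"
proof -
  have "inner2 g (Theta X i j f) = - \<i> * (inner2 (X i g) (X j f) - inner2 (X j g) (X i f))"
    using assms by (simp add: Theta_def Dom_simps X_hermitian)
  also have "\<dots> = - \<i> * (inner2 (shifted_coord X x i g) (shifted_coord X x j f)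
           - inner2 (shifted_coord X x j g) (shifted_coord X x i f))"
    using assms by (simp add: shifted_coord_def Dom_simps X_hermitian) (simp add: algebra_simps)
  finally show ?thesis .
qed

text \<open>The square of the Dirac operator, from \<sigma>_i \<sigma>_j = \<delta>_ij + i \<epsilon>_ijk \<sigma>_k.
  The identity is checked with the factor 2 cleared, where it is a plain ring identity.\<close>
lemma dirac_norm_square:
  assumes "a \<in> Dom" "b \<in> Dom"
  shows "spinor_inner (dirac X x (a, b)) (dirac X x (a, b)) =
      (\<Sum>k\<in>UNIV. inner2 (shifted_coord X x k a) (shifted_coord X x k a)
                 + inner2 (shifted_coord X x k b) (shifted_coord X x k b))
    - 1/2 * (\<Sum>i\<in>UNIV. \<Sum>j\<in>UNIV. \<Sum>k\<in>UNIV.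
               complex_of_real (levi_civita i j k) * expect (a, b) (sigma_tensor k (Theta X i j)))"
proof -
  have "2 * spinor_inner (dirac X x (a, b)) (dirac X x (a, b)) =
      2 * (\<Sum>k\<in>UNIV. inner2 (shifted_coord X x k a) (shifted_coord X x k a)
                 + inner2 (shifted_coord X x k b) (shifted_coord X x k b))
    - (\<Sum>i\<in>UNIV. \<Sum>j\<in>UNIV. \<Sum>k\<in>UNIV.
               complex_of_real (levi_civita i j k) * expect (a, b) (sigma_tensor k (Theta X i j)))"
    using assms
    by (simp add: dirac_components spinor_inner_def expect_def sigma_tensor_def sum_3
        levi_civita_values pauli_entries Dom_simps inner2_Theta[where x = x])
      (simp add: algebra_simps)
  thus ?thesis
    by (simp add: field_simps)
qed

lemma kernel_shifted_moment_zero: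
  assumes a: "a \<in> Dom" and b: "b \<in> Dom" and ker: "dirac X x (a, b) = ((\<lambda>_. 0), (\<lambda>_. 0))"
  shows "inner2 a (shifted_coord X x k a) + inner2 b (shifted_coord X x k b) = 0"
proof (rule kernel_moments_cancel[where r = "\<lambda>k. inner2 b (shifted_coord X x k a)"])
  have eq1: "(\<lambda>n. shifted_coord X x 3 a n + shifted_coord X x 1 b n - \<i> * shifted_coord X x 2 b n) = (\<lambda>_. 0)"
    and eq2: "(\<lambda>n. shifted_coord X x 1 a n + \<i> * shifted_coord X x 2 a n - shifted_coord X x 3 b n) = (\<lambda>_. 0)"
    using ker by (simp_all add: dirac_components)
  have swap: "inner2 f (shifted_coord X x k g) = cnj (inner2 g (shifted_coord X x k f))"
    if "f \<in> Dom" "g \<in> Dom" for f g k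
    using that by (metis shifted_coord_hermitian inner2_commute)
  show "Im (inner2 a (shifted_coord X x k a)) = 0" "Im (inner2 b (shifted_coord X x k b)) = 0" for k
    using swap[OF a a, of k] swap[OF b b, of k] by (metis Reals_cnj_iff complex_is_Real_iff)+
  show "inner2 a (shifted_coord X x 3 a) + cnj (inner2 b (shifted_coord X x 1 a))
      - \<i> * cnj (inner2 b (shifted_coord X x 2 a)) = 0"
    using arg_cong[OF eq1, of "inner2 a"] a b by (simp add: Dom_simps swap[OF a b])
  show "inner2 b (shifted_coord X x 3 a) + inner2 b (shifted_coord X x 1 b)
      - \<i> * inner2 b (shifted_coord X x 2 b) = 0"
    using arg_cong[OF eq1, of "inner2 b"] a b by (simp add: Dom_simps)
  show "inner2 a (shifted_coord X x 1 a) + \<i> * inner2 a (shifted_coord X x 2 a)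
      - cnj (inner2 b (shifted_coord X x 3 a)) = 0"
    using arg_cong[OF eq2, of "inner2 a"] a b by (simp add: Dom_simps swap[OF a b])
  show "inner2 b (shifted_coord X x 1 a) + \<i> * inner2 b (shifted_coord X x 2 a)
      - inner2 b (shifted_coord X x 3 b) = 0"
    using arg_cong[OF eq2, of "inner2 b"] a b by (simp add: Dom_simps)
qed

lemma kernel_expect_coord:
  assumes a: "a \<in> Dom" and b: "b \<in> Dom" and ker: "dirac X x (a, b) = ((\<lambda>_. 0), (\<lambda>_. 0))"
    and normed: "spinor_inner (a, b) (a, b) = 1"
  shows "expect (a, b) (id_tensor (X k)) = complex_of_real (x $ k)"
proof -
  have "inner2 a (X k a) + inner2 b (X k b) - complex_of_real (x $ k) * (inner2 a a + inner2 b b) = 0"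
    using kernel_shifted_moment_zero[OF a b ker, of k] a b
    by (simp add: shifted_coord_def Dom_simps) (simp add: algebra_simps)
  thus ?thesis
    using normed by (simp add: expect_def id_tensor_def spinor_inner_def)
qed

lemma kernel_uncertainty_eq_shifted:
  assumes a: "a \<in> Dom" and b: "b \<in> Dom" and ker: "dirac X x (a, b) = ((\<lambda>_. 0), (\<lambda>_. 0))"
    and normed: "spinor_inner (a, b) (a, b) = 1"
  shows "uncertainty X (a, b) = (\<Sum>k\<in>UNIV. inner2 (shifted_coord X x k a) (shifted_coord X x k a)
                                           + inner2 (shifted_coord X x k b) (shifted_coord X x k b))"
proof -
  have square: "inner2 f (Xsq X f) = (\<Sum>k\<in>UNIV. inner2 (X k f) (X k f))" if "f \<in> Dom" for f
    using that by (simp add: Xsq_def sum_3 Dom_simps X_hermitian)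
  have mean: "inner2 a (X k a) + inner2 b (X k b) = complex_of_real (x $ k)" for k
    using kernel_expect_coord[OF a b ker normed] by (simp add: expect_def id_tensor_def spinor_inner_def)
  have "inner2 (shifted_coord X x k a) (shifted_coord X x k a) + inner2 (shifted_coord X x k b) (shifted_coord X x k b)
      = inner2 (X k a) (X k a) + inner2 (X k b) (X k b)
        - 2 * complex_of_real (x $ k) * (inner2 a (shifted_coord X x k a) + inner2 b (shifted_coord X x k b))
        - (complex_of_real (x $ k))\<^sup>2 * (inner2 a a + inner2 b b)" for k
    using a b by (simp add: shifted_coord_def Dom_simps X_hermitian) (simp add: algebra_simps power2_eq_square)
  also have "\<dots> k = inner2 (X k a) (X k a) + inner2 (X k b) (X k b) - (complex_of_real (x $ k))\<^sup>2" for k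
    using kernel_shifted_moment_zero[OF a b ker, of k] normed by (simp add: spinor_inner_def)
  finally show ?thesis
    using a b by (simp add: uncertainty_def expect_def id_tensor_def spinor_inner_def square mean
        sum.distrib sum_subtractf)
qed

lemma kernel_uncertainty:
  assumes a: "a \<in> Dom" and b: "b \<in> Dom" and ker: "dirac X x (a, b) = ((\<lambda>_. 0), (\<lambda>_. 0))"
    and normed: "spinor_inner (a, b) (a, b) = 1"
  shows "uncertainty X (a, b) =
           1/2 * (\<Sum>i\<in>UNIV. \<Sum>j\<in>UNIV. \<Sum>k\<in>UNIV.
                    complex_of_real (levi_civita i j k) * expect (a, b) (sigma_tensor k (Theta X i j)))"
  using dirac_norm_square[OF a b, of x] ker
  by (simp add: kernel_uncertainty_eq_shifted[OF a b ker normed] spinor_inner_def)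

lemma dirac_hermitian:
  assumes "a \<in> Dom" "b \<in> Dom" "c \<in> Dom" "d \<in> Dom"
  shows "spinor_inner (dirac X x (c, d)) (a, b) = spinor_inner (c, d) (dirac X x (a, b))"
  using assms
  by (simp add: dirac_components spinor_inner_def Dom_simps shifted_coord_hermitian)

lemma spinor_inner_dirac_shift:
  assumes "a \<in> Dom" "b \<in> Dom" "c \<in> Dom" "d \<in> Dom"
  shows "spinor_inner (c, d) (dirac X y (a, b)) = spinor_inner (c, d) (dirac X x (a, b))
           - (\<Sum>k\<in>UNIV. complex_of_real (y $ k - x $ k) * spinor_inner (c, d) (sigma_tensor k id (a, b)))"
  using assms
  by (simp add: dirac_components shifted_coord_def spinor_inner_def sigma_tensor_def sum_3
      pauli_entries Dom_simps) (simp add: algebra_simps)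

lemma kernel_sigma_displacement:
  assumes a: "a \<in> Dom" and b: "b \<in> Dom" and ker_y: "dirac X y (a, b) = ((\<lambda>_. 0), (\<lambda>_. 0))"
    and c: "c \<in> Dom" and d: "d \<in> Dom" and ker_x: "dirac X x (c, d) = ((\<lambda>_. 0), (\<lambda>_. 0))"
  shows "(\<Sum>k\<in>UNIV. complex_of_real (y $ k - x $ k) * spinor_inner (c, d) (sigma_tensor k id (a, b))) = 0"
proof -
  have "spinor_inner (c, d) (dirac X x (a, b)) = spinor_inner (dirac X x (c, d)) (a, b)"
    using dirac_hermitian[OF a b c d] ..
  also have "\<dots> = 0"
    using ker_x by (simp add: spinor_inner_def)
  finally have "spinor_inner (c, d) (dirac X y (a, b))
      = - (\<Sum>k\<in>UNIV. complex_of_real (y $ k - x $ k) * spinor_inner (c, d) (sigma_tensor k id (a, b)))"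
    using spinor_inner_dirac_shift[OF a b c d, of y x] by simp
  moreover have "spinor_inner (c, d) (dirac X y (a, b)) = 0"
    using ker_y by (simp add: spinor_inner_def)
  ultimately show ?thesis
    by simp
qed

lemma sigma_expectation_normal:
  fixes \<Lambda> :: "real^3 \<Rightarrow> 'i spinor"
  defines "M \<equiv> eigenmanifold Dom X"
  assumes state: "\<forall>x\<in>M. \<Lambda> x \<in> dirac_kernel Dom X x \<and> spinor_inner (\<Lambda> x) (\<Lambda> x) = 1"
    and cont: "\<forall>e>0. \<exists>d>0. \<forall>y\<in>M. dist y x < d \<longrightarrow>
                 spinor_norm ((\<lambda>n. fst (\<Lambda> y) n - fst (\<Lambda> x) n), (\<lambda>n. snd (\<Lambda> y) n - snd (\<Lambda> x) n)) < e"
    and x: "x \<in> M"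
  shows "(\<chi> k. Re (expect (\<Lambda> x) (sigma_tensor k id))) \<in> normal_vectors_at M x"
  unfolding normal_vectors_at_def
proof (intro CollectI ballI)
  fix v assume "v \<in> tangent_vectors M x"
  then obtain \<gamma> e where "e > 0" and \<gamma>0: "\<gamma> 0 = x" and \<gamma>M: "\<forall>t\<in>{-e<..<e}. \<gamma> t \<in> M"
    and \<gamma>': "(\<gamma> has_vector_derivative v) (at 0)"
    unfolding tangent_vectors_def by blast
  obtain a b where ab: "\<Lambda> x = (a, b)"
    by (cases "\<Lambda> x")
  with state x have a: "a \<in> Dom" and b: "b \<in> Dom" and ker: "dirac X x (a, b) = ((\<lambda>_. 0), (\<lambda>_. 0))"
    by (auto simp: dirac_kernel_def)
  have ev_M: "\<forall>\<^sub>F t in at 0. \<gamma> t \<in> M"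
    unfolding eventually_at using \<open>e > 0\<close> \<gamma>M by (intro exI[of _ e]) (auto simp: dist_real_def abs_less_iff)
  have ev_ker: "\<forall>\<^sub>F t in at 0. fst (\<Lambda> (\<gamma> t)) \<in> Dom \<and> snd (\<Lambda> (\<gamma> t)) \<in> Dom
      \<and> dirac X (\<gamma> t) (fst (\<Lambda> (\<gamma> t)), snd (\<Lambda> (\<gamma> t))) = ((\<lambda>_. 0), (\<lambda>_. 0))"
    using ev_M by eventually_elim (use state in \<open>auto simp: dirac_kernel_def\<close>)
  have \<gamma>_lim: "(\<gamma> \<longlongrightarrow> x) (at 0)"
    using has_vector_derivative_continuous[OF \<gamma>'] \<gamma>0 by (simp add: isCont_def)
  have "\<forall>\<^sub>F t in at 0. \<gamma> t \<in> M
      \<and> spinor_norm ((\<lambda>n. fst (\<Lambda> (\<gamma> t)) n - a n), (\<lambda>n. snd (\<Lambda> (\<gamma> t)) n - b n)) \<ge> 0"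
    using ev_M ev_ker
    by eventually_elim (use a b in \<open>simp add: spinor_norm_nonneg Dom_ell2\<close>)
  hence "((\<lambda>t. spinor_norm ((\<lambda>n. fst (\<Lambda> (\<gamma> t)) n - a n), (\<lambda>n. snd (\<Lambda> (\<gamma> t)) n - b n))) \<longlongrightarrow> 0) (at 0)"
    using tendsto_zero_along_curve[OF cont \<gamma>_lim] ab by simp
  hence lim: "((\<lambda>t. spinor_inner (a, b) (sigma_tensor k id (\<Lambda> (\<gamma> t))))
      \<longlongrightarrow> spinor_inner (a, b) (sigma_tensor k id (a, b))) (at 0)" for k
    using ev_ker a b
    by (intro tendsto_spinor_inner_sigma_id) (auto simp: Dom_ell2 elim: eventually_mono)
  have "\<forall>\<^sub>F t in at 0. (\<Sum>k\<in>UNIV. complex_of_real (\<gamma> t $ k - \<gamma> 0 $ k)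
                         * spinor_inner (a, b) (sigma_tensor k id (\<Lambda> (\<gamma> t)))) = 0"
    using ev_ker
  proof eventually_elim
    case (elim t)
    obtain c d where "\<Lambda> (\<gamma> t) = (c, d)"
      by (cases "\<Lambda> (\<gamma> t)")
    with elim show ?case
      using kernel_sigma_displacement[of c d "\<gamma> t", OF _ _ _ a b ker] \<gamma>0 by simp
  qed
  from annihilator_limit_annihilates_velocity[OF \<gamma>' this lim]
  have "(\<Sum>k\<in>UNIV. complex_of_real (v $ k) * spinor_inner (a, b) (sigma_tensor k id (a, b))) = 0" .
  hence "Re (\<Sum>k\<in>UNIV. complex_of_real (v $ k) * spinor_inner (a, b) (sigma_tensor k id (a, b))) = 0"
    by simp
  thus "(\<chi> k. Re (expect (\<Lambda> x) (sigma_tensor k id))) \<bullet> v = 0"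
    by (simp add: inner_vec_def expect_def ab sum_3 algebra_simps)
qed

end

theorem mainTheorem2:
  fixes Dom :: "('i::countable) vec set"
    and X :: "3 \<Rightarrow> 'i op"
    and \<Lambda> :: "real^3 \<Rightarrow> 'i spinor"
  assumes dom: "dense_subspace Dom"
    and sa: "\<forall>k. sa_op_on Dom (X k)"
    and state: "\<forall>x\<in>eigenmanifold Dom X. \<Lambda> x \<in> dirac_kernel Dom X x \<and> spinor_inner (\<Lambda> x) (\<Lambda> x) = 1"
    and cont: "\<forall>x\<in>eigenmanifold Dom X. \<forall>e>0. \<exists>d>0. \<forall>y\<in>eigenmanifold Dom X. dist y x < d \<longrightarrow>
                 spinor_norm ((\<lambda>n. fst (\<Lambda> y) n - fst (\<Lambda> x) n), (\<lambda>n. snd (\<Lambda> y) n - snd (\<Lambda> x) n)) < e"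
  shows "\<forall>x\<in>eigenmanifold Dom X.
           (\<forall>k. expect (\<Lambda> x) (id_tensor (X k)) = complex_of_real (x $ k))
         \<and> (\<chi> k. Re (expect (\<Lambda> x) (sigma_tensor k id))) \<in> normal_vectors_at (eigenmanifold Dom X) x
         \<and> uncertainty X (\<Lambda> x) =
             (1/2) * (\<Sum>i\<in>UNIV. \<Sum>j\<in>UNIV. \<Sum>k\<in>UNIV.
                complex_of_real (levi_civita i j k) * expect (\<Lambda> x) (sigma_tensor k (Theta X i j)))"
proof (intro ballI conjI allI)
  interpret d2_brane Dom X
    using dom sa by unfold_locales
  fix x assume x: "x \<in> eigenmanifold Dom X"
  obtain a b where ab: "\<Lambda> x = (a, b)"
    by (cases "\<Lambda> x")
  with state x have a: "a \<in> Dom" and b: "b \<in> Dom" and ker: "dirac X x (a, b) = ((\<lambda>_. 0), (\<lambda>_. 0))"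
    and normed: "spinor_inner (a, b) (a, b) = 1"
    by (auto simp: dirac_kernel_def)
  show "expect (\<Lambda> x) (id_tensor (X k)) = complex_of_real (x $ k)" for k
    unfolding ab by (rule kernel_expect_coord[OF a b ker normed])
  show "(\<chi> k. Re (expect (\<Lambda> x) (sigma_tensor k id))) \<in> normal_vectors_at (eigenmanifold Dom X) x"
    using sigma_expectation_normal[OF state bspec[OF cont x] x] .
  show "uncertainty X (\<Lambda> x) =
          (1/2) * (\<Sum>i\<in>UNIV. \<Sum>j\<in>UNIV. \<Sum>k\<in>UNIV.
             complex_of_real (levi_civita i j k) * expect (\<Lambda> x) (sigma_tensor k (Theta X i j)))"
    unfolding ab by (rule kernel_uncertainty[OF a b ker normed])
qed

end
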